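(* For all nonnegative integers $s$ and $n$, $$\det\Big(W^*_{m,r}[s+i+j,\,s+j]_q\Big)_{0\le i,j\le n}=\prod_{k=0}^{n}[m(s+k)+r]_q^{\,k}.$$
   Context: Fix a real number $q>0$ with $q\neq 1$, a positive integer $m$ and a complex number $r$. For complex $x$ put $q^x=e^{x\ln q}$ and $[x]_q=\frac{1-q^x}{1-q}$. The numbers $W_{m,r}[n,k]_q$, for integers $n,k$, are defined by $W_{m,r}[0,0]_q=1$, $W_{m,r}[n,k]_q=0$ whenever $n<k$ or $n<0$ or $k<0$, and, for $n\ge 1$ and $0\le k\le n$, $$W_{m,r}[n,k]_q=q^{m(k-1)+r}\,W_{m,r}[n-1,k-1]_q+[mk+r]_q\,W_{m,r}[n-1,k]_q .$$ Further, $W^*_{m,r}[n,k]_q=q^{-m\binom{k}{2}-kr}\,W_{m,r}[n,k]_q$ for $n,k\ge 0$. *)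

theory Defs
  imports Complex_Main "Jordan_Normal_Form.Determinant"
begin

definition qpow :: "real \<Rightarrow> complex \<Rightarrow> complex" where
  "qpow q x = exp (x * complex_of_real (ln q))"

definition qnum :: "real \<Rightarrow> complex \<Rightarrow> complex" where
  "qnum q x = (1 - qpow q x) / (1 - complex_of_real q)"

fun W :: "real \<Rightarrow> nat \<Rightarrow> complex \<Rightarrow> nat \<Rightarrow> nat \<Rightarrow> complex" where
  "W q m r 0 k = (if k = 0 then 1 else 0)"
| "W q m r (Suc n) k =
     (if k > Suc n then 0
      else (if k = 0 then 0
            else qpow q (of_int (int m * (int k - 1)) + r) * W q m r n (k - 1))
           + qnum q (of_nat (m * k) + r) * W q m r n k)"

definition Wstar :: "real \<Rightarrow> nat \<Rightarrow> complex \<Rightarrow> nat \<Rightarrow> nat \<Rightarrow> complex" where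
  "Wstar q m r n k = qpow q (- (of_nat (m * (k choose 2)) + of_nat k * r)) * W q m r n k"

end

theory Submission
  imports Defs
begin

text \<open>The array b[N,K] := W*[N,K] satisfies the Pascal-type recurrence
  b[N+1,K+1] = b[N,K] + a(K+1) b[N,K+1] with a(K) = [mK+r]_q and b[K,K] = 1.
  For any such array, subtracting from each column of (b[s+i+j,s+j])_{i,j} its left neighbour
  leaves the first row (1,0,...,0) and turns the remaining block into
  (b[s+1+i+j,s+1+j]) with column j scaled by a(s+1+j); induction on the size gives the product.\<close>

definition shifted_mat :: "(nat \<Rightarrow> nat \<Rightarrow> 'a) \<Rightarrow> nat \<Rightarrow> nat \<Rightarrow> 'a mat" where
  "shifted_mat b s n = mat (Suc n) (Suc n) (\<lambda>(i, j). b (s + i + j) (s + j))"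

definition col_difference_mat :: "nat \<Rightarrow> 'a::comm_ring_1 mat" where
  "col_difference_mat n = mat n n (\<lambda>(k, j). if k = j then 1 else if Suc k = j then -1 else 0)"

lemma col_difference_mat_carrier [simp]: "col_difference_mat n \<in> carrier_mat n n"
  by (simp add: col_difference_mat_def)

lemma det_col_difference_mat: "det (col_difference_mat n) = 1"
  by (subst det_upper_triangular[of _ n])
     (auto simp: col_difference_mat_def upper_triangular_def prod_list_diag_prod)

lemma index_mult_col_difference_mat:
  fixes A :: "'a::comm_ring_1 mat"
  assumes "A \<in> carrier_mat nr n" and "i < nr" and "j < n"
  shows "(A * col_difference_mat n) $$ (i, j) = A $$ (i, j) - (if j = 0 then 0 else A $$ (i, j - 1))"
proof -
  have "(A * col_difference_mat n) $$ (i, j)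
      = (\<Sum>k<n. A $$ (i, k) * (if k = j then 1 else if Suc k = j then -1 else 0))"
    using assms by (auto simp: col_difference_mat_def scalar_prod_def lessThan_atLeast0 intro!: sum.cong)
  also have "\<dots> = (\<Sum>k<n. if k = j then A $$ (i, k) else 0)
                 - (\<Sum>k<n. if j \<noteq> 0 \<and> k = j - 1 then A $$ (i, k) else 0)"
    unfolding sum_subtractf[symmetric] by (rule sum.cong) auto
  finally show ?thesis
    using assms by (auto simp: sum.delta)
qed

lemma det_first_row_unit:
  fixes A :: "'a::comm_ring_1 mat"
  assumes A: "A \<in> carrier_mat (Suc n) (Suc n)"
    and row0: "\<And>j. j < Suc n \<Longrightarrow> A $$ (0, j) = (if j = 0 then 1 else 0)"
  shows "det A = det (mat_delete A 0 0)"
proof -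
  have "det A = (\<Sum>j<Suc n. A $$ (0, j) * cofactor A 0 j)"
    by (rule laplace_expansion_row[OF A]) simp
  also have "\<dots> = cofactor A 0 0"
    using row0 by (subst sum.remove[of _ 0]) (auto intro!: sum.neutral)
  finally show ?thesis
    by (simp add: cofactor_def)
qed

context
  fixes b :: "nat \<Rightarrow> nat \<Rightarrow> 'a::comm_ring_1" and a :: "nat \<Rightarrow> 'a"
  assumes recurrence: "\<And>N K. b (Suc N) (Suc K) = b N K + a (Suc K) * b N (Suc K)"
    and diagonal: "\<And>K. b K K = 1"
begin

lemma shifted_mat_col_difference_row0:
  assumes "j < Suc (Suc n)"
  shows "(shifted_mat b s (Suc n) * col_difference_mat (Suc (Suc n))) $$ (0, j) = (if j = 0 then 1 else 0)"
  using assms by (subst index_mult_col_difference_mat[of _ "Suc (Suc n)"])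
    (auto simp: shifted_mat_def diagonal)

lemma shifted_mat_col_difference_minor:
  "mat_delete (shifted_mat b s (Suc n) * col_difference_mat (Suc (Suc n))) 0 0
   = shifted_mat b (Suc s) n * mat_diag (Suc n) (\<lambda>j. a (Suc s + j))"
  (is "mat_delete (?M * ?D) 0 0 = ?M' * ?A")
proof (rule eq_matI)
  fix i j assume "i < dim_row (?M' * ?A)" and "j < dim_col (?M' * ?A)"
  then have ij: "i < Suc n" "j < Suc n"
    by (simp_all add: shifted_mat_def mat_diag_def)
  have carrier: "?M \<in> carrier_mat (Suc (Suc n)) (Suc (Suc n))"
    by (simp add: shifted_mat_def)
  have "mat_delete (?M * ?D) 0 0 $$ (i, j) = (?M * ?D) $$ (Suc i, Suc j)"
    using ij by (simp add: mat_delete_def col_difference_mat_def shifted_mat_def)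
  also have "\<dots> = b (s + Suc i + Suc j) (s + Suc j) - b (s + Suc i + j) (s + j)"
    using ij by (subst index_mult_col_difference_mat[OF carrier]) (simp_all add: shifted_mat_def)
  also have "\<dots> = b (Suc s + i + j) (Suc s + j) * a (Suc s + j)"
    using recurrence[of "s + Suc i + j" "s + j"] by (simp add: algebra_simps)
  also have "\<dots> = (?M' * ?A) $$ (i, j)"
    using ij by (simp add: mat_diag_mult_right[of _ "Suc n"] shifted_mat_def)
  finally show "mat_delete (?M * ?D) 0 0 $$ (i, j) = (?M' * ?A) $$ (i, j)" .
qed (auto simp: mat_delete_def shifted_mat_def col_difference_mat_def mat_diag_def)

lemma det_shifted_mat: "det (shifted_mat b s n) = (\<Prod>k = 0..n. a (s + k) ^ k)"
proof (induction n arbitrary: s)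
  case 0
  show ?case
    by (simp add: shifted_mat_def det_single diagonal)
next
  case (Suc n)
  let ?D = "col_difference_mat (Suc (Suc n)) :: 'a mat"
  let ?A = "mat_diag (Suc n) (\<lambda>j. a (Suc s + j))"
  have carrier: "shifted_mat b s (Suc n) \<in> carrier_mat (Suc (Suc n)) (Suc (Suc n))"
    by (simp add: shifted_mat_def)
  have det_A: "det ?A = (\<Prod>k = 0..n. a (Suc s + k))"
    by (subst det_upper_triangular[of _ "Suc n"])
       (auto simp: mat_diag_def upper_triangular_def prod_list_diag_prod atLeastLessThanSuc_atLeastAtMost
         simp del: prod.op_ivl_Suc)
  have "det (shifted_mat b s (Suc n)) = det (shifted_mat b s (Suc n) * ?D)"
    by (simp add: det_mult[OF carrier] det_col_difference_mat)
  also have "\<dots> = det (shifted_mat b (Suc s) n * ?A)"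
    by (subst det_first_row_unit[of _ "Suc n"])
       (use carrier shifted_mat_col_difference_row0 shifted_mat_col_difference_minor in auto)
  also have "\<dots> = det (shifted_mat b (Suc s) n) * det ?A"
    by (rule det_mult[of _ "Suc n"]) (simp_all add: shifted_mat_def)
  also have "\<dots> = (\<Prod>k = 0..Suc n. a (s + k) ^ k)"
    unfolding Suc.IH det_A prod.atLeast0_atMost_Suc_shift
    by (simp add: prod.distrib[symmetric] mult.commute)
  finally show ?case .
qed

end

lemma W_eq_0: "N < K \<Longrightarrow> W q m r N K = 0"
  by (induction N arbitrary: K) auto

lemma qpow_add: "qpow q (x + y) = qpow q x * qpow q y"
  unfolding qpow_def by (simp add: exp_add distrib_right)

lemma Wstar_Suc_Suc:
  "Wstar q m r (Suc N) (Suc K) = Wstar q m r N K + qnum q (of_nat (m * Suc K) + r) * Wstar q m r N (Suc K)"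
proof (cases "N < K")
  case True
  then show ?thesis by (simp add: Wstar_def W_eq_0)
next
  case False
  have "Suc K choose 2 = (K choose 2) + K"
    by (simp add: numeral_2_eq_2)
  then have "qpow q (- (of_nat (m * (Suc K choose 2)) + of_nat (Suc K) * r))
      * qpow q (of_int (int m * (int (Suc K) - 1)) + r)
      = qpow q (- (of_nat (m * (K choose 2)) + of_nat K * r))"
    by (simp add: qpow_add[symmetric] algebra_simps)
  with False show ?thesis
    by (simp add: Wstar_def algebra_simps)
qed

lemma Wstar_diagonal: "Wstar q m r K K = 1"
proof (induction K)
  case 0
  show ?case by (simp add: Wstar_def qpow_def numeral_2_eq_2)
next
  case (Suc K)
  have "Wstar q m r K (Suc K) = 0"
    by (simp add: Wstar_def W_eq_0)
  with Suc show ?case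
    by (simp only: Wstar_Suc_Suc) simp
qed

theorem theorem7:
  fixes q :: real and m s n :: nat and r :: complex
  assumes "q > 0" and "q \<noteq> 1" and "m > 0"
  shows "det (mat (Suc n) (Suc n) (\<lambda>(i, j). Wstar q m r (s + i + j) (s + j)))
         = (\<Prod>k = 0..n. qnum q (of_nat (m * (s + k)) + r) ^ k)"
  using det_shifted_mat[of "Wstar q m r" "\<lambda>K. qnum q (of_nat (m * K) + r)" s n]
  by (simp add: shifted_mat_def Wstar_Suc_Suc Wstar_diagonal)

end
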